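(* Let $R$ be a $*$-ring. The following are equivalent: (1) $R$ is strongly $\pi$-$*$-regular. (2) $R$ is $\pi$-regular and every idempotent of $R$ is a projection. (3) For every $a\in R$ there exist $n\geq 1$ and a projection $p\in R$ such that $a^nR=pR$, and $R$ is abelian. (4) For every $a\in R$ there exists $n\geq 1$ such that $a^n$ is strongly $*$-regular. (5) For every $a\in R$ there exist a projection $p$ and a unit $u$ of $R$ such that $a=p+u$ and $ap$ is nilpotent; and $v^{-1}qv$ is a projection for every unit $v\in U(R)$ and every projection $q$ of $R$.
   Context: Rings are associative with identity. A $*$-ring is a ring $R$ with a map $*:R\to R$ satisfying $(x+y)^*=x^*+y^*$, $(xy)^*=y^*x^*$, $(x^* )^*=x$. A projection is an element $p$ with $p^2=p=p^*$. $U(R)$ denotes the units of $R$. $R$ is abelian if all idempotents are central. $R$ is $\pi$-regular if for each $a\in R$ there exist $n\ge1$ and $b\in R$ with $a^n=a^nba^n$. An element $a$ is strongly $*$-regular if $a=pu=up$ for some projection $p$ and unit $u$. An element $a\in R$ is strongly $\pi$-$*$-regular if there exist a projection $e$, a unit $u$ and an integer $m\geq1$ such that $a^m=eu$ and $a,e,u$ pairwise commute; $R$ is strongly $\pi$-$*$-regular if every element is. *)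

theory Defs
  imports Main
begin

definition star_ring :: "('a::ring_1 \<Rightarrow> 'a) \<Rightarrow> bool" where
  "star_ring st \<longleftrightarrow> (\<forall>x y. st (x + y) = st x + st y) \<and> (\<forall>x y. st (x * y) = st y * st x)
     \<and> (\<forall>x. st (st x) = x)"

definition projection :: "('a::ring_1 \<Rightarrow> 'a) \<Rightarrow> 'a \<Rightarrow> bool" where
  "projection st p \<longleftrightarrow> p * p = p \<and> p = st p"

definition is_unit :: "'a::ring_1 \<Rightarrow> bool" where
  "is_unit u \<longleftrightarrow> (\<exists>v. u * v = 1 \<and> v * u = 1)"

definition idempotent :: "'a::ring_1 \<Rightarrow> bool" where
  "idempotent e \<longleftrightarrow> e * e = e"

definition abelian_ring :: "'a::ring_1 itself \<Rightarrow> bool" where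
  "abelian_ring _ \<longleftrightarrow> (\<forall>e::'a. idempotent e \<longrightarrow> (\<forall>x. e * x = x * e))"

definition pi_regular :: "'a::ring_1 itself \<Rightarrow> bool" where
  "pi_regular _ \<longleftrightarrow> (\<forall>a::'a. \<exists>n\<ge>1. \<exists>b. a ^ n = a ^ n * b * a ^ n)"

definition strongly_star_regular :: "('a::ring_1 \<Rightarrow> 'a) \<Rightarrow> 'a \<Rightarrow> bool" where
  "strongly_star_regular st a \<longleftrightarrow>
     (\<exists>p u. projection st p \<and> is_unit u \<and> a = p * u \<and> a = u * p)"

definition strongly_pi_star_regular_elem :: "('a::ring_1 \<Rightarrow> 'a) \<Rightarrow> 'a \<Rightarrow> bool" where
  "strongly_pi_star_regular_elem st a \<longleftrightarrow>
     (\<exists>e u m. projection st e \<and> is_unit u \<and> m \<ge> (1::nat) \<and> a ^ m = e * u \<and>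
        a * e = e * a \<and> a * u = u * a \<and> e * u = u * e)"

definition strongly_pi_star_regular :: "('a::ring_1 \<Rightarrow> 'a) \<Rightarrow> bool" where
  "strongly_pi_star_regular st \<longleftrightarrow> (\<forall>a. strongly_pi_star_regular_elem st a)"

definition right_ideal_gen :: "'a::ring_1 \<Rightarrow> 'a set" where
  "right_ideal_gen a = {a * x | x. True}"

definition nilpotent :: "'a::ring_1 \<Rightarrow> bool" where
  "nilpotent x \<longleftrightarrow> (\<exists>k::nat. x ^ k = 0)"

end

theory Submission
  imports Defs
begin

text \<open>
  If every idempotent is a projection, then for an idempotent \<open>e\<close> the idempotent
  \<open>e + e x (1 - e)\<close> is self-adjoint, which forces \<open>e x (1 - e) = 0\<close>; hence idempotents are
  central. The same perturbation is the conjugate of \<open>e\<close> by the unit \<open>1 + e x (1 - e)\<close>, so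
  closure of projections under conjugation also makes projections central. Once idempotents are
  central, a relation \<open>a\<^sup>n b a\<^sup>n = a\<^sup>n\<close> gives \<open>a\<^sup>n = e u\<close> with \<open>e = a\<^sup>n b\<close> and the unit
  \<open>u = a\<^sup>n + 1 - e\<close>; conversely, from \<open>a\<^sup>m = e u\<close> one gets \<open>a = (1 - e) + (a - (1 - e))\<close>,
  where \<open>a (1 - e)\<close> is nilpotent and \<open>a - (1 - e)\<close> is a product of three units.
\<close>

lemma power_mult_commuting:
  fixes x y :: "'a::monoid_mult"
  assumes "x * y = y * x"
  shows "(x * y) ^ n = x ^ n * y ^ n"
proof (induction n)
  case (Suc n)
  have "(x * y) ^ Suc n = x * (y * x ^ n) * y ^ n"
    using Suc by (simp add: mult.assoc)
  also have "\<dots> = x * (x ^ n * y) * y ^ n"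
    using power_commuting_commutes[OF assms] by simp
  also have "\<dots> = x ^ Suc n * y ^ Suc n"
    by (simp add: mult.assoc)
  finally show ?case .
qed simp

lemma idempotent_power:
  fixes e :: "'a::monoid_mult"
  assumes "e * e = e" and "n \<ge> 1"
  shows "e ^ n = e"
  using assms(2)
proof (induction n rule: dec_induct)
  case (step n)
  then show ?case using assms(1) by (simp add: power_Suc2)
qed simp

lemma is_unit_mult:
  assumes "is_unit x" and "is_unit y"
  shows "is_unit (x * y)"
proof -
  obtain x' y' where "x * x' = 1" "x' * x = 1" "y * y' = 1" "y' * y = 1"
    using assms unfolding is_unit_def by blast
  moreover have "(x * y) * (y' * x') = x * (y * y') * x'" "(y' * x') * (x * y) = y' * (x' * x) * y"
    by (simp_all add: mult.assoc)
  ultimately have "(x * y) * (y' * x') = 1" "(y' * x') * (x * y) = 1"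
    by simp_all
  then show ?thesis unfolding is_unit_def by blast
qed

lemma is_unit_power:
  assumes "is_unit x"
  shows "is_unit (x ^ n)"
  using assms left_right_inverse_power unfolding is_unit_def by blast

lemma is_unit_of_power:
  fixes x :: "'a::ring_1"
  assumes "is_unit (x ^ Suc k)"
  shows "is_unit x"
proof -
  obtain v where v: "x ^ Suc k * v = 1" "v * x ^ Suc k = 1"
    using assms unfolding is_unit_def by blast
  have right: "x * (x ^ k * v) = 1" and left: "(v * x ^ k) * x = 1"
    using v by (simp_all add: mult.assoc power_commutes)
  have "v * x ^ k = x ^ k * v"
    using left right by (metis mult.assoc mult_1_left mult_1_right)
  then show ?thesis unfolding is_unit_def using left right by metis
qed

lemma one_minus_mult_geometric_sum:
  fixes N :: "'a::ring_1"
  shows "(1 - N) * (\<Sum>i<k. N ^ i) = 1 - N ^ k"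
proof (induction k)
  case (Suc k)
  have "(1 - N) * (\<Sum>i<Suc k. N ^ i) = (1 - N) * (\<Sum>i<k. N ^ i) + (1 - N) * N ^ k"
    by (simp add: distrib_left)
  also have "\<dots> = 1 - N ^ Suc k"
    using Suc by (simp add: left_diff_distrib)
  finally show ?case .
qed simp

lemma is_unit_one_minus_nilpotent:
  fixes N :: "'a::ring_1"
  assumes "N ^ k = 0"
  shows "is_unit (1 - N)"
proof -
  let ?T = "\<Sum>i<k. N ^ i"
  have "N * ?T = ?T * N"
    by (simp add: sum_distrib_left sum_distrib_right power_commutes)
  then have "?T * (1 - N) = (1 - N) * ?T"
    by (simp add: algebra_simps)
  then show ?thesis
    using one_minus_mult_geometric_sum[of N k] assms unfolding is_unit_def by auto
qed

lemma idempotent_eq_of_unit_factor: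
  fixes f p u :: "'a::ring_1"
  assumes "f * f = f" and "f = p * u" and "p * u = u * p" and "p * p = p" and "is_unit u"
  shows "f = p"
proof -
  obtain w where w: "u * w = 1" "w * u = 1"
    using assms(5) unfolding is_unit_def by blast
  have p_eq: "p = f * w" using assms(2) w by (simp add: mult.assoc)
  have "w * f = f * w"
    using assms(2,3) w by (metis mult.assoc mult_1_left mult_1_right)
  then have "p * f = p"
    using p_eq assms(1) by (metis mult.assoc)
  moreover have "p * f = f"
    using assms(2,4) by (simp add: mult.assoc[symmetric])
  ultimately show ?thesis by simp
qed

lemma central_idempotent_complement:
  fixes e :: "'a::ring_1"
  assumes "\<And>x. e * x = x * e" and "e * e = e"
  shows "(1 - e) * x = x * (1 - e)" "(1 - e) * (1 - e) = 1 - e" "e * (1 - e) = 0"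
  using assms(1)[of x] assms(2) by (simp_all add: algebra_simps)

lemma central_idempotent_corner_mult:
  fixes e x y :: "'a::ring_1"
  assumes central: "\<And>z. e * z = z * e" and idem: "e * e = e"
  shows "(x * e + (1 - e)) * (y * e + (1 - e)) = x * y * e + (1 - e)"
proof -
  note compl = central_idempotent_complement[OF central idem]
  have "(x * e + (1 - e)) * (y * e + (1 - e))
      = x * (e * y) * e + x * (e * (1 - e)) + (1 - e) * y * e + (1 - e) * (1 - e)"
    by (simp add: distrib_left distrib_right mult.assoc)
  also have "x * (e * y) * e = x * y * e"
    using central[of y] idem by (simp add: mult.assoc)
  also have "(1 - e) * y * e = y * (e * (1 - e))"
    using compl(1)[of y] central[of "1 - e"] by (simp add: mult.assoc)
  finally show ?thesis using compl(2,3) by simp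
qed

lemma central_idempotent_corner_power:
  fixes e x :: "'a::ring_1"
  assumes "\<And>z. e * z = z * e" and "e * e = e"
  shows "(x * e + (1 - e)) ^ n = x ^ n * e + (1 - e)"
  by (induction n) (simp_all add: central_idempotent_corner_mult[OF assms])

lemma is_unit_central_idempotent_corner:
  fixes e u :: "'a::ring_1"
  assumes "\<And>z. e * z = z * e" and "e * e = e" and "is_unit u"
  shows "is_unit (u * e + (1 - e))"
proof -
  obtain w where "u * w = 1" "w * u = 1" using assms(3) unfolding is_unit_def by blast
  then show ?thesis
    using central_idempotent_corner_mult[OF assms(1,2), of u w] central_idempotent_corner_mult[OF assms(1,2), of w u]
    unfolding is_unit_def by auto
qed

lemma central_idempotent_factorization:
  fixes a e :: "'a::ring_1"
  assumes "\<And>x. e * x = x * e" and "e * e = e"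
  shows "a - (1 - e) = (a * e + (1 - e)) * (e - (1 - e)) * (1 - a * (1 - e))"
proof -
  define p where "p = 1 - e"
  have ep: "e * p = 0" "p * e = 0" "p * p = p"
    using assms(2) by (simp_all add: p_def algebra_simps)
  have "(a * e + p) * (e - p) = a * e - p"
    using assms(2) ep by (simp add: algebra_simps)
  moreover have "(a * e - p) * (1 - a * p) = a * e + a * p - p"
  proof -
    have "a * e * (a * p) = a * a * (e * p)" using assms(1) by (metis mult.assoc)
    moreover have "p * (a * p) = a * p"
      using central_idempotent_complement[OF assms] ep by (metis mult.assoc p_def)
    ultimately show ?thesis using ep by (simp add: algebra_simps)
  qed
  moreover have "a - p = a * e + a * p - p" by (simp add: p_def algebra_simps)
  ultimately show ?thesis unfolding p_def[symmetric] by (simp add: mult.assoc)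
qed

text \<open>The three factors are invertible: the first because its \<open>Suc k\<close>-th power is
  \<open>e u + (1 - e)\<close>, the second is an involution, the third is \<open>1\<close> minus a nilpotent.\<close>

lemma central_idempotent_unit_decomposition:
  fixes a e u :: "'a::ring_1"
  assumes central: "\<And>x. e * x = x * e" and idem: "e * e = e"
    and power: "a ^ Suc k = e * u" and unit: "is_unit u"
  shows "is_unit (a - (1 - e))" and "(a * (1 - e)) ^ Suc k = 0"
proof -
  note compl = central_idempotent_complement[OF central idem]
  have "(a * (1 - e)) ^ Suc k = a ^ Suc k * (1 - e) ^ Suc k"
    using compl(1)[of a] by (intro power_mult_commuting) simp
  also have "\<dots> = u * (e * (1 - e))"
    using power central[of u] idempotent_power[OF compl(2), of "Suc k"] by (simp add: mult.assoc)
  finally show nil: "(a * (1 - e)) ^ Suc k = 0" using compl(3) by simp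
  have "(a * e + (1 - e)) ^ Suc k = u * e + (1 - e)"
    unfolding central_idempotent_corner_power[OF central idem] power
    using central[of u] idem by (simp add: mult.assoc)
  then have "is_unit ((a * e + (1 - e)) ^ Suc k)"
    using is_unit_central_idempotent_corner[OF central idem unit] by simp
  then have "is_unit (a * e + (1 - e))" by (rule is_unit_of_power)
  moreover have "(e - (1 - e)) * (e - (1 - e)) = 1"
    using idem compl(3) by (simp add: algebra_simps)
  then have "is_unit (e - (1 - e))" unfolding is_unit_def by blast
  moreover have "is_unit (1 - a * (1 - e))"
    using nil by (rule is_unit_one_minus_nilpotent)
  ultimately show "is_unit (a - (1 - e))"
    unfolding central_idempotent_factorization[OF central idem, where a = a] by (intro is_unit_mult)
qed

lemma regular_element_unit_factor:
  fixes x b :: "'a::ring_1"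
  assumes regular: "x * b * x = x"
    and central: "\<And>y. (x * b) * y = y * (x * b)" "\<And>y. (b * x) * y = y * (b * x)"
  shows "x = x * b * (x + 1 - x * b)" and "is_unit (x + 1 - x * b)"
proof -
  define e where "e = x * b"
  have e_central: "e * y = y * e" for y using central(1) unfolding e_def .
  have ex: "e * x = x" unfolding e_def using regular .
  have ee: "e * e = e" unfolding e_def using regular by (metis mult.assoc)
  have "x * (b * x) = x" using regular by (simp add: mult.assoc)
  then have "b * x = e * (b * x)" "e = (b * x) * e"
    unfolding e_def using central(2)[of x] central(1)[of b] regular by (metis mult.assoc)+
  then have bx: "b * x = e" using e_central by metis
  have x_corner: "x + 1 - e = x * e + (1 - e)"
    using ex e_central[of x] by simp
  show "x = x * b * (x + 1 - x * b)"
    using ex ee unfolding e_def[symmetric] by (simp add: algebra_simps)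
  have "(x * e + (1 - e)) * (b * e + (1 - e)) = 1" "(b * e + (1 - e)) * (x * e + (1 - e)) = 1"
    unfolding central_idempotent_corner_mult[OF e_central ee]
    using ee bx unfolding e_def[symmetric] by simp_all
  then show "is_unit (x + 1 - x * b)"
    unfolding is_unit_def e_def[symmetric] x_corner by blast
qed

lemma star_ring_laws:
  assumes "star_ring st"
  shows "st (x + y) = st x + st y" "st (x * y) = st y * st x" "st (st x) = x"
    and "st 0 = 0" "st (- x) = - st x" "st (x - y) = st x - st y" "st 1 = 1"
proof -
  have add: "\<And>x y. st (x + y) = st x + st y"
    and mult: "\<And>x y. st (x * y) = st y * st x"
    and involution: "\<And>x. st (st x) = x"
    using assms by (auto simp: star_ring_def)
  then show "st (x + y) = st x + st y" "st (x * y) = st y * st x" "st (st x) = x"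
    by blast+
  show zero: "st 0 = 0" using add[of 0 0] by simp
  show minus: "st (- x) = - st x" for x
    using add[of x "- x"] zero by (simp add: eq_neg_iff_add_eq_0 add.commute)
  show "st (x - y) = st x - st y" using add[of x "- y"] minus[of y] by simp
  have "st 1 = st 1 * st (st 1)" using involution by simp
  also have "\<dots> = 1" using mult[of "st 1" 1] involution by simp
  finally show "st 1 = 1" .
qed

lemma projection_one_minus:
  assumes "star_ring st" and "projection st p"
  shows "projection st (1 - p)"
  using assms by (simp add: projection_def star_ring_laws algebra_simps)

lemma idempotent_corner_perturbation:
  fixes e x :: "'a::ring_1"
  assumes "e * e = e"
  shows "(e + e * x * (1 - e)) * (e + e * x * (1 - e)) = e + e * x * (1 - e)"
proof -
  have orth: "(1 - e) * e = 0" using assms by (simp add: algebra_simps)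
  have "(e + e * x * (1 - e)) * (e + e * x * (1 - e))
      = e * e + e * (e * x * (1 - e)) + e * x * ((1 - e) * e) + e * x * ((1 - e) * e) * x * (1 - e)"
    by (simp add: algebra_simps)
  also have "\<dots> = e + e * x * (1 - e)"
    using orth assms by (simp add: mult.assoc[symmetric])
  finally show ?thesis .
qed

text \<open>The adjoint of \<open>e + e x (1 - e)\<close> is \<open>e + (1 - e) x\<^sup>* e\<close>, and the two corner terms live
  in the orthogonal corners \<open>e R (1 - e)\<close> and \<open>(1 - e) R e\<close>.\<close>

lemma corner_zero_if_perturbation_selfadjoint:
  assumes "star_ring st" and "projection st e"
    and "st (e + e * x * (1 - e)) = e + e * x * (1 - e)"
  shows "e * x * (1 - e) = 0"
proof -
  have e: "e * e = e" "st e = e" using assms(2) by (auto simp: projection_def)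
  have "st (e + e * x * (1 - e)) = e + (1 - e) * st x * e"
    using e by (simp add: star_ring_laws[OF assms(1)] mult.assoc)
  then have corners: "e * x * (1 - e) = (1 - e) * st x * e" using assms(3) by simp
  have "e * (e * x * (1 - e)) = e * x * (1 - e)" by (simp add: mult.assoc[symmetric] e)
  moreover have "e * (1 - e) = 0" using e by (simp add: right_diff_distrib)
  then have "e * ((1 - e) * st x * e) = 0" by (simp add: mult.assoc[symmetric])
  ultimately show ?thesis using corners by simp
qed

lemma commute_if_corners_zero:
  fixes e x :: "'a::ring_1"
  assumes "e * x * (1 - e) = 0" and "(1 - e) * x * e = 0"
  shows "e * x = x * e"
proof -
  have "e * x - e * x * e = e * x * (1 - e)" by (simp add: right_diff_distrib)
  moreover have "x * e - e * x * e = (1 - e) * x * e" by (simp add: left_diff_distrib)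
  ultimately show ?thesis using assms by simp
qed

lemma projection_central_if_perturbations_projections:
  assumes star: "star_ring st"
    and perturb: "\<And>g x. projection st g \<Longrightarrow> projection st (g + g * x * (1 - g))"
    and proj: "projection st e"
  shows "e * x = x * e"
proof -
  have corner: "g * x * (1 - g) = 0" if "projection st g" for g
    using corner_zero_if_perturbation_selfadjoint[OF star that] perturb[OF that]
    by (simp add: projection_def)
  show ?thesis
    using corner[OF proj] corner[OF projection_one_minus[OF star proj]]
    by (intro commute_if_corners_zero) simp_all
qed

lemma abelian_if_idempotents_projections:
  assumes star: "star_ring st"
    and idem_proj: "\<forall>e::'a::ring_1. idempotent e \<longrightarrow> projection st e"
  shows "abelian_ring TYPE('a)"
  unfolding abelian_ring_def
proof (intro allI impI)
  fix e x :: 'a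
  assume "idempotent e"
  have "projection st (g + g * x * (1 - g))" if "projection st g" for g x :: 'a
  proof -
    have "g * g = g" using that by (simp add: projection_def)
    then have "idempotent (g + g * x * (1 - g))"
      by (simp add: idempotent_def idempotent_corner_perturbation)
    then show ?thesis using idem_proj by blast
  qed
  then show "e * x = x * e"
    using projection_central_if_perturbations_projections[OF star] idem_proj \<open>idempotent e\<close>
    by blast
qed

text \<open>\<open>g + g x (1 - g)\<close> is the conjugate of \<open>g\<close> by the unit \<open>1 + n\<close>, \<open>n = g x (1 - g)\<close>,
  whose inverse is \<open>1 - n\<close> because \<open>n\<^sup>2 = 0\<close>.\<close>

lemma projection_central_if_conjugation_closed:
  assumes star: "star_ring st"
    and conj: "\<forall>v q w. is_unit v \<and> projection st q \<and> v * w = 1 \<and> w * v = 1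
                  \<longrightarrow> projection st (w * q * v)"
    and proj: "projection st (e::'a::ring_1)"
  shows "e * x = x * e"
proof (rule projection_central_if_perturbations_projections[OF star _ proj])
  fix g x :: 'a
  assume g: "projection st g"
  define n where "n = g * x * (1 - g)"
  have gg: "g * g = g" using g by (simp add: projection_def)
  have orth: "(1 - g) * g = 0" using gg by (simp add: algebra_simps)
  have nn: "n * n = 0" and ng: "n * g = 0"
    unfolding n_def using orth by (simp_all add: mult.assoc flip: mult.assoc[of "1 - g"])
  have gn: "g * n = n" unfolding n_def using gg by (simp add: mult.assoc[symmetric])
  have inv: "(1 + n) * (1 - n) = 1" "(1 - n) * (1 + n) = 1"
    using nn by (simp_all add: algebra_simps)
  have "(1 - n) * g * (1 + n) = g + n" using ng gn by (simp add: algebra_simps)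
  moreover have "projection st ((1 - n) * g * (1 + n))"
    using conj inv g unfolding is_unit_def by blast
  ultimately show "projection st (g + g * x * (1 - g))" unfolding n_def by simp
qed

lemma right_ideal_gen_eq_iff:
  fixes a b :: "'a::ring_1"
  shows "right_ideal_gen a = right_ideal_gen b \<longleftrightarrow> (\<exists>x. a = b * x) \<and> (\<exists>y. b = a * y)"
proof
  assume eq: "right_ideal_gen a = right_ideal_gen b"
  have "a \<in> right_ideal_gen a" "b \<in> right_ideal_gen b"
    unfolding right_ideal_gen_def by (metis (mono_tags) mem_Collect_eq mult_1_right)+
  then show "(\<exists>x. a = b * x) \<and> (\<exists>y. b = a * y)"
    using eq unfolding right_ideal_gen_def by blast
next
  assume "(\<exists>x. a = b * x) \<and> (\<exists>y. b = a * y)"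
  then show "right_ideal_gen a = right_ideal_gen b"
    unfolding right_ideal_gen_def by (auto simp: mult.assoc) (metis mult.assoc)+
qed

lemma strongly_pi_star_regular_imp_powers_strongly_star_regular:
  assumes "strongly_pi_star_regular st"
  shows "\<forall>a. \<exists>n\<ge>1. strongly_star_regular st (a ^ n)"
proof
  fix a
  obtain e u m where "projection st e" "is_unit u" "m \<ge> 1" "a ^ m = e * u" "e * u = u * e"
    using assms unfolding strongly_pi_star_regular_def strongly_pi_star_regular_elem_def by blast
  moreover from this have "a ^ m = u * e" by simp
  ultimately show "\<exists>n\<ge>1. strongly_star_regular st (a ^ n)"
    unfolding strongly_star_regular_def by blast
qed

lemma powers_strongly_star_regular_imp_pi_regular:
  assumes "\<forall>a::'a::ring_1. \<exists>n\<ge>1. strongly_star_regular st (a ^ n)"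
  shows "pi_regular TYPE('a)"
  unfolding pi_regular_def
proof
  fix a :: 'a
  obtain n p u where n: "n \<ge> 1" and p: "projection st p" and u: "is_unit u"
    and factor: "a ^ n = p * u" "a ^ n = u * p"
    using assms unfolding strongly_star_regular_def by blast
  obtain w where w: "u * w = 1" using u unfolding is_unit_def by blast
  have "a ^ n * w * a ^ n = p * (u * w) * (p * u)"
    using factor by (simp add: mult.assoc)
  also have "\<dots> = a ^ n"
    using w p factor(1) by (simp add: projection_def mult.assoc[symmetric])
  finally show "\<exists>n\<ge>1. \<exists>b. a ^ n = a ^ n * b * a ^ n" using n by metis
qed

lemma powers_strongly_star_regular_imp_idempotents_projections:
  assumes "\<forall>a::'a::ring_1. \<exists>n\<ge>1. strongly_star_regular st (a ^ n)"
  shows "\<forall>e::'a. idempotent e \<longrightarrow> projection st e"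
proof (intro allI impI)
  fix f :: 'a
  assume "idempotent f"
  then have ff: "f * f = f" by (simp add: idempotent_def)
  obtain n p u where n: "n \<ge> 1" and p: "projection st p" and u: "is_unit u"
    and factor: "f ^ n = p * u" "f ^ n = u * p"
    using assms unfolding strongly_star_regular_def by blast
  have "f = p * u" using factor(1) idempotent_power[OF ff n] by simp
  moreover have "p * u = u * p" using factor by simp
  moreover have "p * p = p" using p by (simp add: projection_def)
  ultimately have "f = p" using idempotent_eq_of_unit_factor[OF ff _ _ _ u] by blast
  then show "projection st f" using p by simp
qed

lemma pi_regular_imp_strongly_pi_star_regular:
  assumes star: "star_ring st" and regular: "pi_regular TYPE('a)"
    and idem_proj: "\<forall>e::'a::ring_1. idempotent e \<longrightarrow> projection st e"
  shows "strongly_pi_star_regular st"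
  unfolding strongly_pi_star_regular_def strongly_pi_star_regular_elem_def
proof
  fix a :: 'a
  have central: "\<And>e x :: 'a. idempotent e \<Longrightarrow> e * x = x * e"
    using abelian_if_idempotents_projections[OF star idem_proj] unfolding abelian_ring_def by blast
  obtain n b where n: "n \<ge> 1" and reg: "a ^ n * b * a ^ n = a ^ n"
    using regular unfolding pi_regular_def by metis
  define e where "e = a ^ n * b"
  define u where "u = a ^ n + 1 - e"
  have "idempotent (a ^ n * b)" "idempotent (b * a ^ n)"
    using reg unfolding idempotent_def by (metis mult.assoc)+
  note factor = regular_element_unit_factor[OF reg central[OF this(1)] central[OF this(2)]]
  have e_central: "e * x = x * e" for x
    using central reg unfolding e_def idempotent_def by (metis mult.assoc)
  have "a * u = u * a"
    using e_central[of a] power_commutes[of a n] unfolding u_def by (simp add: algebra_simps)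
  moreover have "projection st e"
    using idem_proj reg unfolding e_def idempotent_def by (metis mult.assoc)
  moreover have "a ^ n = e * u" "is_unit u"
    using factor unfolding e_def u_def by simp_all
  ultimately show "\<exists>e u m. projection st e \<and> is_unit u \<and> m \<ge> 1 \<and> a ^ m = e * u \<and>
        a * e = e * a \<and> a * u = u * a \<and> e * u = u * e"
    using n e_central[of a, symmetric] e_central[of u] by blast
qed

lemma pi_regular_imp_right_ideals_projections:
  assumes regular: "pi_regular TYPE('a)"
    and idem_proj: "\<forall>e::'a::ring_1. idempotent e \<longrightarrow> projection st e"
  shows "\<forall>a::'a. \<exists>n\<ge>1. \<exists>p. projection st p \<and> right_ideal_gen (a ^ n) = right_ideal_gen p"
proof
  fix a :: 'a
  obtain n b where n: "n \<ge> 1" and reg: "a ^ n = a ^ n * b * a ^ n"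
    using regular unfolding pi_regular_def by blast
  have "idempotent (a ^ n * b)"
    unfolding idempotent_def using reg by (metis mult.assoc)
  moreover have "right_ideal_gen (a ^ n) = right_ideal_gen (a ^ n * b)"
    unfolding right_ideal_gen_eq_iff using reg by metis
  ultimately show "\<exists>n\<ge>1. \<exists>p. projection st p \<and> right_ideal_gen (a ^ n) = right_ideal_gen p"
    using n idem_proj by blast
qed

lemma right_ideals_projections_imp_pi_regular:
  assumes "\<forall>a::'a::ring_1. \<exists>n\<ge>1. \<exists>p. projection st p \<and> right_ideal_gen (a ^ n) = right_ideal_gen p"
  shows "pi_regular TYPE('a)"
  unfolding pi_regular_def
proof
  fix a :: 'a
  obtain n p x y where n: "n \<ge> 1" and p: "projection st p"
    and gen: "p = a ^ n * x" "a ^ n = p * y"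
    using assms unfolding right_ideal_gen_eq_iff by metis
  have "a ^ n * x * a ^ n = p * p * y" using gen by (simp add: mult.assoc)
  then have "a ^ n = a ^ n * x * a ^ n" using p gen(2) by (simp add: projection_def)
  then show "\<exists>n\<ge>1. \<exists>b. a ^ n = a ^ n * b * a ^ n" using n by blast
qed

lemma right_ideals_projections_imp_idempotents_projections:
  assumes gen: "\<forall>a::'a::ring_1. \<exists>n\<ge>1. \<exists>p. projection st p \<and> right_ideal_gen (a ^ n) = right_ideal_gen p"
    and abelian: "abelian_ring TYPE('a)"
  shows "\<forall>e::'a. idempotent e \<longrightarrow> projection st e"
proof (intro allI impI)
  fix f :: 'a
  assume f: "idempotent f"
  then have ff: "f * f = f" by (simp add: idempotent_def)
  obtain n p where n: "n \<ge> 1" and p: "projection st p"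
    and "right_ideal_gen (f ^ n) = right_ideal_gen p"
    using gen by blast
  then obtain x y where xy: "p = f * x" "f = p * y"
    using idempotent_power[OF ff n] unfolding right_ideal_gen_eq_iff by auto
  have "p * f = f" using xy p by (metis mult.assoc projection_def)
  moreover have "f * p = p" using xy ff by (metis mult.assoc)
  moreover have "f * p = p * f" using abelian f unfolding abelian_ring_def by blast
  ultimately show "projection st f" using p by simp
qed

lemma strongly_pi_star_regular_imp_projection_unit_sum:
  assumes star: "star_ring st" and spsr: "strongly_pi_star_regular st"
  shows "\<forall>a::'a::ring_1. \<exists>p u. projection st p \<and> is_unit u \<and> a = p + u \<and> nilpotent (a * p)"
proof
  fix a :: 'a
  obtain e u m where e: "projection st e" and u: "is_unit u" and m: "m \<ge> 1" and "a ^ m = e * u"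
    using spsr unfolding strongly_pi_star_regular_def strongly_pi_star_regular_elem_def by blast
  moreover obtain k where "m = Suc k" using m by (cases m) auto
  ultimately have power: "a ^ Suc k = e * u" by simp
  have "\<forall>e::'a. idempotent e \<longrightarrow> projection st e"
    using spsr strongly_pi_star_regular_imp_powers_strongly_star_regular
      powers_strongly_star_regular_imp_idempotents_projections by blast
  then have "e * x = x * e" for x
    using abelian_if_idempotents_projections[OF star] e
    unfolding abelian_ring_def idempotent_def projection_def by blast
  note decomposition = central_idempotent_unit_decomposition[OF this _ power u]
  have "a = (1 - e) + (a - (1 - e))" by simp
  then show "\<exists>p u. projection st p \<and> is_unit u \<and> a = p + u \<and> nilpotent (a * p)"
    using projection_one_minus[OF star e] decomposition e
    unfolding nilpotent_def projection_def by blast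
qed

lemma strongly_pi_star_regular_imp_conjugation_closed:
  assumes "star_ring st" and "strongly_pi_star_regular st"
  shows "\<forall>v q w. is_unit v \<and> projection st q \<and> v * w = 1 \<and> w * v = 1
                  \<longrightarrow> projection st (w * q * v)"
proof (intro allI impI)
  fix v q w :: 'a
  assume h: "is_unit v \<and> projection st q \<and> v * w = 1 \<and> w * v = 1"
  have "\<forall>e::'a. idempotent e \<longrightarrow> projection st e"
    using assms(2) strongly_pi_star_regular_imp_powers_strongly_star_regular
      powers_strongly_star_regular_imp_idempotents_projections by blast
  moreover have "(w * q * v) * (w * q * v) = w * (q * q) * v"
    using h by (simp add: mult.assoc flip: mult.assoc[of v w])
  then have "(w * q * v) * (w * q * v) = w * q * v"
    using h by (simp add: projection_def)
  ultimately show "projection st (w * q * v)" by (simp add: idempotent_def)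
qed

lemma projection_unit_sum_imp_strongly_pi_star_regular:
  assumes star: "star_ring st"
    and sum: "\<forall>a::'a::ring_1. \<exists>p u. projection st p \<and> is_unit u \<and> a = p + u \<and> nilpotent (a * p)"
    and conj: "\<forall>v q w. is_unit v \<and> projection st q \<and> v * w = 1 \<and> w * v = 1
                  \<longrightarrow> projection st (w * q * v)"
  shows "strongly_pi_star_regular st"
  unfolding strongly_pi_star_regular_def strongly_pi_star_regular_elem_def
proof
  fix a :: 'a
  obtain p u k where p: "projection st p" and u: "is_unit u" and a: "a = p + u"
    and nil: "(a * p) ^ k = 0"
    using sum unfolding nilpotent_def by blast
  have p_central: "p * x = x * p" for x
    using projection_central_if_conjugation_closed[OF star conj p] .
  have pp: "p * p = p" using p by (simp add: projection_def)
  define e where "e = 1 - p"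
  define m where "m = Suc k"
  have m: "m \<ge> 1" unfolding m_def by simp
  note compl = central_idempotent_complement[OF p_central pp, folded e_def]
  have e_central: "e * x = x * e" for x using compl(1) .
  have "a ^ m * p = (a * p) ^ m"
    using p_central[of a] idempotent_power[OF pp m] by (simp add: power_mult_commuting)
  then have power_p: "a ^ m * p = 0" using nil unfolding m_def by simp
  have "a * e = u * e" using compl(3) p_central[of e] unfolding a by (simp add: algebra_simps)
  then have "a ^ m * e = u ^ m * e"
    using e_central idempotent_power[OF compl(2) m] by (metis power_mult_commuting)
  then have power: "a ^ m = e * u ^ m"
    using power_p e_central unfolding e_def by (simp add: algebra_simps)
  have "a * u = u * a" using p_central[of a] unfolding a by (simp add: algebra_simps)
  then have "a * u ^ m = u ^ m * a" using power_commuting_commutes by metis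
  moreover have "projection st e" unfolding e_def by (rule projection_one_minus[OF star p])
  ultimately show "\<exists>e u m. projection st e \<and> is_unit u \<and> m \<ge> 1 \<and> a ^ m = e * u \<and>
        a * e = e * a \<and> a * u = u * a \<and> e * u = u * e"
    using m power e_central[of a, symmetric] e_central[of "u ^ m"] is_unit_power[OF u] by blast
qed

theorem theorem3p6:
  fixes st :: "'a::ring_1 \<Rightarrow> 'a"
  assumes "star_ring st"
  shows
   "(strongly_pi_star_regular st \<longleftrightarrow>
       (pi_regular TYPE('a) \<and> (\<forall>e::'a. idempotent e \<longrightarrow> projection st e)))
    \<and> (strongly_pi_star_regular st \<longleftrightarrow>
       ((\<forall>a::'a. \<exists>n\<ge>1. \<exists>p. projection st p \<and> right_ideal_gen (a ^ n) = right_ideal_gen p)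
        \<and> abelian_ring TYPE('a)))
    \<and> (strongly_pi_star_regular st \<longleftrightarrow>
       (\<forall>a::'a. \<exists>n\<ge>1. strongly_star_regular st (a ^ n)))
    \<and> (strongly_pi_star_regular st \<longleftrightarrow>
       ((\<forall>a::'a. \<exists>p u. projection st p \<and> is_unit u \<and> a = p + u \<and> nilpotent (a * p))
        \<and> (\<forall>v q w. is_unit v \<and> projection st q \<and> v * w = 1 \<and> w * v = 1
                  \<longrightarrow> projection st (w * q * v))))"
proof -
  have one_four: "strongly_pi_star_regular st \<longleftrightarrow> (\<forall>a::'a. \<exists>n\<ge>1. strongly_star_regular st (a ^ n))"
    using strongly_pi_star_regular_imp_powers_strongly_star_regular
      powers_strongly_star_regular_imp_pi_regular
      powers_strongly_star_regular_imp_idempotents_projections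
      pi_regular_imp_strongly_pi_star_regular[OF assms] by blast
  have one_two: "strongly_pi_star_regular st \<longleftrightarrow>
      (pi_regular TYPE('a) \<and> (\<forall>e::'a. idempotent e \<longrightarrow> projection st e))"
    using one_four powers_strongly_star_regular_imp_pi_regular
      powers_strongly_star_regular_imp_idempotents_projections
      pi_regular_imp_strongly_pi_star_regular[OF assms] by blast
  have two_three: "(pi_regular TYPE('a) \<and> (\<forall>e::'a. idempotent e \<longrightarrow> projection st e)) \<longleftrightarrow>
      ((\<forall>a::'a. \<exists>n\<ge>1. \<exists>p. projection st p \<and> right_ideal_gen (a ^ n) = right_ideal_gen p)
        \<and> abelian_ring TYPE('a))"
    using pi_regular_imp_right_ideals_projections abelian_if_idempotents_projections[OF assms]
      right_ideals_projections_imp_pi_regular right_ideals_projections_imp_idempotents_projections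
    by blast
  show ?thesis
    using one_two two_three one_four
      strongly_pi_star_regular_imp_projection_unit_sum[OF assms]
      strongly_pi_star_regular_imp_conjugation_closed[OF assms]
      projection_unit_sum_imp_strongly_pi_star_regular[OF assms]
    by blast
qed

end
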